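(* Let $l_0\ge1$ be an integer and consider the string $\mathbf s=``G_{\mu\mu}G^{(\mu)}_{\nu\nu}S_{\mu\nu}"$. Let $w=a_1a_2\cdots a_{4l_0}$ be any binary sequence of length $4l_0$ such that $\mathbf s_w\ne\emptyset$. Then either $\mathcal F_{\rm off}(\mathbf s_w)\ge2l_0$, or $\mathbf s_w$ is maximally expanded.
   Context: Fix two distinct symbols (indices) $\mu,\nu$. A string is a finite concatenation of symbols from the alphabet $\mathfrak A=\{G_{\alpha\beta},\,G_{\alpha\alpha}^{-1},\,S_{\alpha\beta}:\alpha,\beta\in\{\mu,\nu\}\}\cup\{G^{(\nu)}_{\mu\mu},G^{(\mu)}_{\nu\nu},(G^{(\nu)}_{\mu\mu})^{-1},(G^{(\mu)}_{\nu\nu})^{-1}\}$; $\emptyset$ denotes the empty string (strings may carry a sign $\pm$, which is irrelevant here). The maximally expanded symbols are $\mathfrak A_{\max}=\{G_{\mu\nu},G_{\nu\mu},G^{(\nu)}_{\mu\mu},G^{(\mu)}_{\nu\nu},(G^{(\nu)}_{\mu\mu})^{-1},(G^{(\mu)}_{\nu\nu})^{-1},S_{\mu\mu},S_{\nu\nu},S_{\mu\nu},S_{\nu\mu}\}$; a string is maximally expanded if all its symbols lie in $\mathfrak A_{\max}$. The off-diagonal symbols are $G_{\mu\nu},G_{\nu\mu},S_{\mu\nu},S_{\nu\mu}$; $\mathcal F_{\rm off}(\mathbf s)$ is the number of off-diagonal symbols in $\mathbf s$ (counted with multiplicity). String operators, with $\alpha\ne\beta\in\{\mu,\nu\}$: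 (i) $\tau_0$: find the first occurrence in $\mathbf s$ of a symbol $G_{\alpha\alpha}$ or $G_{\alpha\alpha}^{-1}$ (for some $\alpha\in\{\mu,\nu\}$; these are the symbols without superscript); replace $G_{\alpha\alpha}$ by $G^{(\beta)}_{\alpha\alpha}$, resp. $G_{\alpha\alpha}^{-1}$ by $(G^{(\beta)}_{\alpha\alpha})^{-1}$; if none is found, $\tau_0(\mathbf s)=\mathbf s$. (ii) $\tau_1$: find the same first occurrence; replace $G_{\alpha\alpha}$ by $G_{\alpha\beta}G_{\beta\alpha}G_{\beta\beta}^{-1}$, resp. $G_{\alpha\alpha}^{-1}$ by $-G_{\alpha\beta}G_{\beta\alpha}G_{\alpha\alpha}^{-1}(G^{(\beta)}_{\alpha\alpha})^{-1}G_{\beta\beta}^{-1}$; if none is found, $\tau_1(\mathbf s)=\emptyset$. (iii) $\rho$ replaces each symbol $G_{\alpha\beta}$ ($\alpha\ne\beta$) in $\mathbf s$ by $G_{\alpha\alpha}G^{(\alpha)}_{\beta\beta}S_{\alpha\beta}$. All operators map $\emptyset$ to $\emptyset$. For a binary sequence $w=a_1\cdots a_m$, $\mathbf s_w:=\rho^{a_m}\tau_{a_m}\cdots\rho^{a_1}\tau_{a_1}(\mathbf s)$, where $\rho^0$ is the identity and $\rho^1=\rho$. *)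

theory Defs
  imports Main
begin

datatype idx = Mu | Nu

fun other :: "idx \<Rightarrow> idx" where
  "other Mu = Nu" | "other Nu = Mu"

text \<open>Alphabet symbols.
  G a b     : G_{ab}   (any a b)
  Ginv a    : (G_{aa})^{-1}
  S a b     : S_{ab}
  Gsup a    : G^{(other a)}_{aa}
  Gsupinv a : (G^{(other a)}_{aa})^{-1}\<close>
datatype sym = G idx idx | Ginv idx | S idx idx | Gsup idx | Gsupinv idx

text \<open>Strings (signs ignored); the empty list is the empty string.\<close>
type_synonym str = "sym list"

fun tau0 :: "str \<Rightarrow> str" where
  "tau0 [] = []"
| "tau0 (x # xs) = (case x of
      G a b \<Rightarrow> (if a = b then Gsup a # xs else x # tau0 xs)
    | Ginv a \<Rightarrow> Gsupinv a # xs
    | _ \<Rightarrow> x # tau0 xs)"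

fun tau1_aux :: "str \<Rightarrow> str option" where
  "tau1_aux [] = None"
| "tau1_aux (x # xs) = (case x of
      G a b \<Rightarrow> (if a = b
                  then Some ([G a (other a), G (other a) a, Ginv (other a)] @ xs)
                  else map_option (Cons x) (tau1_aux xs))
    | Ginv a \<Rightarrow> Some ([G a (other a), G (other a) a, Ginv a, Gsupinv a, Ginv (other a)] @ xs)
    | _ \<Rightarrow> map_option (Cons x) (tau1_aux xs))"

definition tau1 :: "str \<Rightarrow> str" where
  "tau1 s = (case tau1_aux s of None \<Rightarrow> [] | Some t \<Rightarrow> t)"

fun rho_sym :: "sym \<Rightarrow> str" where
  "rho_sym (G a b) = (if a \<noteq> b then [G a a, Gsup b, S a b] else [G a b])"
| "rho_sym x = [x]"

definition rho :: "str \<Rightarrow> str" where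
  "rho s = concat (map rho_sym s)"

definition step :: "bool \<Rightarrow> str \<Rightarrow> str" where
  "step a s = (if a then rho (tau1 s) else tau0 s)"

text \<open>s_w for w = a_1 ... a_m (list [a_1,...,a_m]); a_1 applied first.\<close>
definition sw :: "str \<Rightarrow> bool list \<Rightarrow> str" where
  "sw s w = fold step w s"

fun max_sym :: "sym \<Rightarrow> bool" where
  "max_sym (G a b) = (a \<noteq> b)"
| "max_sym (Ginv a) = False"
| "max_sym (S a b) = True"
| "max_sym (Gsup a) = True"
| "max_sym (Gsupinv a) = True"

definition max_expanded :: "str \<Rightarrow> bool" where
  "max_expanded s = (\<forall>x \<in> set s. max_sym x)"

fun off_sym :: "sym \<Rightarrow> bool" where
  "off_sym (G a b) = (a \<noteq> b)"
| "off_sym (S a b) = (a \<noteq> b)"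
| "off_sym _ = False"

definition F_off :: "str \<Rightarrow> nat" where
  "F_off s = length (filter off_sym s)"

end

theory Submission
  imports Defs
begin

text \<open>Let \<open>N(s)\<close> count the symbols of \<open>s\<close> that are not maximally expanded and \<open>O(s)\<close> the
  off-diagonal \<open>G\<close>'s. A \<open>0\<close>-step on a string with \<open>N > 0\<close> lowers \<open>N\<close> by one, while a \<open>1\<close>-step
  raises \<open>F\<^sub>o\<^sub>f\<^sub>f\<close> by exactly two and \<open>N + O\<close> by at most three: one non-maximal symbol from \<open>\<tau>\<^sub>1\<close>,
  two more when \<open>\<rho>\<close> expands the two new off-diagonal \<open>G\<close>'s. A string with \<open>N = 0\<close> is either
  left unchanged or killed. So if \<open>w\<close> has \<open>k\<close> ones and \<open>F\<^sub>o\<^sub>f\<^sub>f = 1 + 2k < 2l\<^sub>0\<close>, then \<open>w\<close> has at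
  least \<open>3l\<^sub>0 + 1\<close> zeros, more than the \<open>1 + 3k\<close> units of \<open>N\<close> ever available, so \<open>N\<close> reached \<open>0\<close>.\<close>

definition non_max_count :: "str \<Rightarrow> nat" where
  "non_max_count s = length (filter (\<lambda>x. \<not> max_sym x) s)"

fun off_G :: "sym \<Rightarrow> bool" where
  "off_G (G a b) = (a \<noteq> b)"
| "off_G _ = False"

definition off_G_count :: "str \<Rightarrow> nat" where
  "off_G_count s = length (filter off_G s)"

lemmas counts_defs = non_max_count_def off_G_count_def F_off_def

lemma other_neq [simp]: "other a \<noteq> a" "a \<noteq> other a"
  by (cases a; simp)+

lemma max_expanded_iff_non_max_count: "max_expanded s \<longleftrightarrow> non_max_count s = 0"
  by (auto simp: non_max_count_def max_expanded_def filter_empty_conv)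

lemma counts_tau0:
  "non_max_count (tau0 s) = non_max_count s - 1"
  "F_off (tau0 s) = F_off s"
  "off_G_count (tau0 s) = off_G_count s"
  by (induction s rule: tau0.induct) (auto simp: counts_defs split: sym.split)

lemma counts_tau1_aux:
  assumes "tau1_aux s = Some t"
  shows "non_max_count t \<le> non_max_count s + 1"
    and "F_off t = F_off s + 2"
    and "off_G_count t = off_G_count s + 2"
  using assms
  by (induction s arbitrary: t rule: tau1_aux.induct)
     (auto simp: counts_defs split: sym.splits if_splits)

lemma counts_tau1:
  assumes "tau1 s \<noteq> []"
  shows "non_max_count (tau1 s) \<le> non_max_count s + 1"
    and "F_off (tau1 s) = F_off s + 2"
    and "off_G_count (tau1 s) = off_G_count s + 2"
  using assms counts_tau1_aux[of s] by (auto simp: tau1_def split: option.splits)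

lemma counts_append [simp]:
  "non_max_count (s @ t) = non_max_count s + non_max_count t"
  "F_off (s @ t) = F_off s + F_off t"
  "off_G_count (s @ t) = off_G_count s + off_G_count t"
  by (simp_all add: counts_defs)

lemma counts_Nil [simp]:
  "non_max_count [] = 0" "F_off [] = 0" "off_G_count [] = 0"
  by (simp_all add: counts_defs)

lemma rho_Nil [simp]: "rho [] = []"
  and rho_Cons: "rho (x # s) = rho_sym x @ rho s"
  by (simp_all add: rho_def)

lemma counts_rho_sym:
  "non_max_count (rho_sym x) = non_max_count [x] + off_G_count [x]"
  "F_off (rho_sym x) = F_off [x]"
  "off_G_count (rho_sym x) = 0"
  by (cases x; simp add: counts_defs)+

lemma counts_rho:
  "non_max_count (rho s) = non_max_count s + off_G_count s"
  "F_off (rho s) = F_off s"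
  "off_G_count (rho s) = 0"
  by (induction s) (simp_all add: rho_Cons counts_rho_sym, simp_all add: counts_defs)

lemma rho_eq_Nil_iff [simp]: "rho s = [] \<longleftrightarrow> s = []"
proof -
  have "rho_sym x \<noteq> []" for x by (cases x) auto
  then show ?thesis by (cases s) (simp_all add: rho_Cons)
qed

lemma tau0_max_expanded: "max_expanded s \<Longrightarrow> tau0 s = s"
  by (induction s rule: tau0.induct) (auto simp: max_expanded_def split: sym.split)

lemma tau1_max_expanded: "max_expanded s \<Longrightarrow> tau1 s = []"
proof -
  assume "max_expanded s"
  then have "tau1_aux s = None"
    by (induction s rule: tau1_aux.induct) (auto simp: max_expanded_def split: sym.split)
  then show ?thesis by (simp add: tau1_def)
qed

lemma sw_Nil_word [simp]: "sw s [] = s"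
  and sw_Cons_word: "sw s (a # w) = sw (step a s) w"
  by (simp_all add: sw_def)

lemma sw_Nil_string [simp]: "sw [] w = []"
  by (induction w) (simp_all add: sw_Cons_word step_def tau1_def rho_def)

lemma step_ne_Nil_if_sw_ne_Nil: "sw s (a # w) \<noteq> [] \<Longrightarrow> step a s \<noteq> []"
  by (auto simp: sw_Cons_word)

lemma sw_max_expanded: "max_expanded s \<Longrightarrow> sw s w = s \<or> sw s w = []"
  by (induction w) (auto simp: sw_Cons_word step_def tau0_max_expanded tau1_max_expanded)

lemma F_off_sw:
  "sw s w \<noteq> [] \<Longrightarrow> F_off (sw s w) = F_off s + 2 * count_list w True"
proof (induction w arbitrary: s)
  case (Cons a w)
  from Cons.prems have "step a s \<noteq> []" by (rule step_ne_Nil_if_sw_ne_Nil)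
  then have "F_off (step a s) = F_off s + (if a then 2 else 0)"
    by (auto simp: step_def counts_tau0 counts_rho counts_tau1)
  with Cons show ?case by (simp add: sw_Cons_word)
qed simp

lemma non_max_count_sw:
  "sw s w \<noteq> [] \<Longrightarrow> max_expanded (sw s w) \<or>
     non_max_count (sw s w) + count_list w False
       \<le> non_max_count s + off_G_count s + 3 * count_list w True"
proof (induction w arbitrary: s)
  case (Cons a w)
  show ?case
  proof (cases "max_expanded s")
    case True
    with Cons.prems sw_max_expanded show ?thesis by metis
  next
    case not_max: False
    have ne: "step a s \<noteq> []" using Cons.prems by (rule step_ne_Nil_if_sw_ne_Nil)
    have potential_step:
      "non_max_count (step a s) + off_G_count (step a s) + (if a then 0 else 1)
         \<le> non_max_count s + off_G_count s + (if a then 3 else 0)"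
    proof (cases a)
      case True
      then have "tau1 s \<noteq> []" using ne by (simp add: step_def)
      with True counts_tau1[OF this] show ?thesis by (simp add: step_def counts_rho)
    next
      case False
      with not_max show ?thesis
        by (simp add: step_def counts_tau0 max_expanded_iff_non_max_count)
    qed
    from Cons.prems have "sw (step a s) w \<noteq> []" by (simp add: sw_Cons_word)
    from Cons.IH[OF this] potential_step show ?thesis
      by (auto simp: sw_Cons_word split: if_splits)
  qed
qed simp

lemma count_list_True_False: "count_list w True + count_list w False = length w"
  by (induction w) auto

theorem lemma4p8:
  fixes l0 :: nat and w :: "bool list"
  assumes "l0 \<ge> 1"
    and "length w = 4 * l0"
    and "sw [G Mu Mu, Gsup Nu, S Mu Nu] w \<noteq> []"
  shows "F_off (sw [G Mu Mu, Gsup Nu, S Mu Nu] w) \<ge> 2 * l0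
         \<or> max_expanded (sw [G Mu Mu, Gsup Nu, S Mu Nu] w)"
proof -
  let ?s = "[G Mu Mu, Gsup Nu, S Mu Nu]"
  have "F_off (sw ?s w) = 1 + 2 * count_list w True"
    using F_off_sw[OF assms(3)] by (simp add: F_off_def)
  moreover have "max_expanded (sw ?s w) \<or> count_list w False \<le> 1 + 3 * count_list w True"
    using non_max_count_sw[OF assms(3)] by (auto simp: non_max_count_def off_G_count_def)
  moreover have "count_list w True + count_list w False = 4 * l0"
    using assms(2) count_list_True_False by simp
  ultimately show ?thesis by auto
qed

end
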